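(* Let $K$ be a semigroup, $(X,\|\cdot\|)$ a seminormed space, and $U_g:X\to X$ a linear map for each $g\in K$ such that $U_gU_h=U_{gh}$ and $\|U_gx\|\ge\|x\|$ for all $g,h\in K$ and $x\in X$. Suppose that $B_{x_0}:=\{U_gx_0:g\in K\}$ is totally bounded in $(X,\|\cdot\|)$ for some $x_0\in X$. Then for each $\varepsilon>0$ the set \[ E:=\{g\in K:\|U_gx_0-x_0\|<\varepsilon\} \] is relatively dense in $K$.
   Context: A set $E\subset K$ is relatively dense in the semigroup $K$ if there exist $r\in\mathbb{N}$ and $g_1,\dots,g_r\in K$ such that $E\cap\{gg_1,\dots,gg_r\}\neq\varnothing$ for all $g\in K$. A set $B$ is totally bounded in a pseudometric space if for every $\varepsilon>0$ there is a finite set $F$ with every point of $B$ at distance $<\varepsilon$ from some point of $F$. *)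

theory Defs
  imports "HOL-Analysis.Analysis"
begin

definition seminorm :: "('a::real_vector \<Rightarrow> real) \<Rightarrow> bool" where
  "seminorm N \<longleftrightarrow> (\<forall>x. N x \<ge> 0) \<and> (\<forall>c x. N (c *\<^sub>R x) = \<bar>c\<bar> * N x)
     \<and> (\<forall>x y. N (x + y) \<le> N x + N y)"

definition totally_bounded_sn :: "('a::real_vector \<Rightarrow> real) \<Rightarrow> 'a set \<Rightarrow> bool" where
  "totally_bounded_sn N B \<longleftrightarrow>
     (\<forall>\<epsilon>>0. \<exists>F. finite F \<and> (\<forall>b\<in>B. \<exists>f\<in>F. N (b - f) < \<epsilon>))"

definition relatively_dense :: "'k::semigroup_mult set \<Rightarrow> bool" where
  "relatively_dense E \<longleftrightarrow>
     (\<exists>r::nat. \<exists>gs :: nat \<Rightarrow> 'k. \<forall>g. E \<inter> {g * gs i | i. i < r} \<noteq> {})"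

end

theory Submission
  imports Defs
begin

text \<open>Choose a maximal \<open>\<epsilon>\<close>-separated subset \<open>S = {U\<^sub>h\<^sub>i x\<^sub>0 : i < m}\<close> of
\<open>B\<^sub>x\<^sub>0\<close>; total boundedness bounds the size of separated subsets, so one of largest
cardinality exists. Since every \<open>U\<^sub>c\<close> is linear and expanding, \<open>U\<^sub>c S\<close> is again
\<open>\<epsilon>\<close>-separated of the same cardinality, hence also maximal and an \<open>\<epsilon>\<close>-net of \<open>B\<^sub>x\<^sub>0\<close>.
Given \<open>g\<close>, pick any \<open>k\<close> and apply this with \<open>c = kg\<close> to the point \<open>U\<^sub>k x\<^sub>0\<close>:
some \<open>i\<close> gives \<open>\<parallel>U\<^sub>k(x\<^sub>0 - U\<^sub>g\<^sub>h\<^sub>i x\<^sub>0)\<parallel> < \<epsilon>\<close>, and expansivity of \<open>U\<^sub>k\<close> yields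
\<open>g h\<^sub>i \<in> E\<close>. (Going through \<open>U\<^sub>k x\<^sub>0\<close> avoids needing an identity in \<open>K\<close>.)\<close>

lemma seminorm_zero:
  assumes "seminorm N" shows "N 0 = 0"
  using assms unfolding seminorm_def by (metis abs_zero mult_zero_left scale_zero_left)

lemma seminorm_minus_commute:
  assumes "seminorm N" shows "N (x - y) = N (y - x)"
proof -
  have "N ((-1) *\<^sub>R (x - y)) = \<bar>-1\<bar> * N (x - y)"
    using assms unfolding seminorm_def by blast
  then show ?thesis by simp
qed

lemma seminorm_triangle_diff:
  assumes "seminorm N" shows "N (x - z) \<le> N (x - y) + N (y - z)"
proof -
  have "N ((x - y) + (y - z)) \<le> N (x - y) + N (y - z)"
    using assms unfolding seminorm_def by blast
  then show ?thesis by simp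
qed

definition separated :: "('a::real_vector \<Rightarrow> real) \<Rightarrow> real \<Rightarrow> 'a set \<Rightarrow> bool" where
  "separated N e S \<longleftrightarrow> (\<forall>x\<in>S. \<forall>y\<in>S. x \<noteq> y \<longrightarrow> e \<le> N (x - y))"

definition maximal_separated ::
    "('a::real_vector \<Rightarrow> real) \<Rightarrow> real \<Rightarrow> 'a set \<Rightarrow> 'a set \<Rightarrow> bool" where
  "maximal_separated N e B S \<longleftrightarrow> S \<subseteq> B \<and> finite S \<and> separated N e S \<and>
     (\<forall>T. T \<subseteq> B \<and> finite T \<and> separated N e T \<longrightarrow> card T \<le> card S)"

lemma separated_card_le_net:
  assumes "seminorm N"
    and "finite F" "\<forall>b\<in>B. \<exists>f\<in>F. N (b - f) < e/2"
    and "S \<subseteq> B" "separated N e S"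
  shows "finite S \<and> card S \<le> card F"
proof -
  have "\<forall>s\<in>S. \<exists>f\<in>F. N (s - f) < e/2" using assms(3,4) by blast
  then obtain nearest where nearest: "\<And>s. s \<in> S \<Longrightarrow> nearest s \<in> F \<and> N (s - nearest s) < e/2"
    by metis
  have inj: "inj_on nearest S"
  proof (rule inj_onI, rule ccontr)
    fix s t assume st: "s \<in> S" "t \<in> S" "nearest s = nearest t" "s \<noteq> t"
    have "N (s - t) \<le> N (s - nearest s) + N (nearest t - t)"
      using seminorm_triangle_diff[OF assms(1)] st(3) by metis
    also have "\<dots> < e"
      using nearest[OF st(1)] nearest[OF st(2)] seminorm_minus_commute[OF assms(1), of t "nearest t"]
      by linarith
    finally show False using assms(5) st unfolding separated_def by force
  qed
  have image: "nearest ` S \<subseteq> F" using nearest by blast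
  then have "finite S" using assms(2) inj finite_imageD finite_subset by blast
  moreover have "card S \<le> card F"
    using card_mono[OF assms(2) image] card_image[OF inj] by simp
  ultimately show ?thesis ..
qed

lemma ex_maximal_separated:
  assumes "seminorm N" "totally_bounded_sn N B" "e > 0"
  shows "\<exists>S. maximal_separated N e B S"
proof -
  obtain F where F: "finite F" "\<forall>b\<in>B. \<exists>f\<in>F. N (b - f) < e/2"
    using assms(2) half_gt_zero[OF assms(3)] unfolding totally_bounded_sn_def by blast
  let ?P = "\<lambda>S. S \<subseteq> B \<and> finite S \<and> separated N e S"
  have "\<forall>S. ?P S \<longrightarrow> card S < Suc (card F)"
    using separated_card_le_net[OF assms(1) F] le_imp_less_Suc by blast
  moreover have "?P {}" unfolding separated_def by simp
  ultimately obtain S where "?P S" "\<forall>T. ?P T \<longrightarrow> card T \<le> card S"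
    using ex_has_greatest_nat[of ?P "{}" card "Suc (card F)"] by blast
  then show ?thesis unfolding maximal_separated_def by blast
qed

lemma maximal_separated_net:
  assumes "seminorm N" "e > 0" "maximal_separated N e B S" "b \<in> B"
  shows "\<exists>s\<in>S. N (b - s) < e"
proof (rule ccontr)
  assume far: "\<not> (\<exists>s\<in>S. N (b - s) < e)"
  then have "b \<notin> S"
    using assms(1,2) seminorm_zero by fastforce
  have "separated N e (insert b S)"
    using assms(3) far seminorm_minus_commute[OF assms(1)]
    unfolding maximal_separated_def separated_def by (auto simp: not_less)
  then have "card (insert b S) \<le> card S"
    using assms(3,4) unfolding maximal_separated_def by blast
  with \<open>b \<notin> S\<close> assms(3) show False unfolding maximal_separated_def by simp
qed

lemma maximal_separated_image:
  assumes "seminorm N" "e > 0" "linear L" "\<And>x. N x \<le> N (L x)" "L ` B \<subseteq> B"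
    and "maximal_separated N e B S"
  shows "maximal_separated N e B (L ` S)"
proof -
  have S: "S \<subseteq> B" "finite S" "separated N e S"
    using assms(6) unfolding maximal_separated_def by blast+
  have spread: "e \<le> N (L s - L t)" if "s \<in> S" "t \<in> S" "s \<noteq> t" for s t
  proof -
    have "e \<le> N (s - t)" using S(3) that unfolding separated_def by blast
    also have "\<dots> \<le> N (L (s - t))" by (rule assms(4))
    finally show ?thesis by (simp add: linear_diff[OF assms(3)])
  qed
  have "inj_on L S"
  proof (rule inj_onI, rule ccontr)
    fix s t assume "s \<in> S" "t \<in> S" "L s = L t" "s \<noteq> t"
    then have "e \<le> N 0" using spread by fastforce
    then show False using assms(2) seminorm_zero[OF assms(1)] by simp
  qed
  moreover have "separated N e (L ` S)"
    unfolding separated_def using spread by blast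
  ultimately show ?thesis
    using assms(5,6) S unfolding maximal_separated_def by (auto simp: card_image)
qed

lemma finite_subset_range_enum:
  assumes "finite S" "S \<subseteq> range \<phi>"
  obtains hs and n :: nat where "S = (\<lambda>i. \<phi> (hs i)) ` {..<n}"
proof -
  obtain H where "finite H" "S = \<phi> ` H"
    using finite_subset_image[OF assms] by blast
  moreover obtain hs where "bij_betw hs {0..<card H} H"
    using ex_bij_betw_nat_finite[OF \<open>finite H\<close>] by blast
  ultimately have "S = (\<lambda>i. \<phi> (hs i)) ` {..<card H}"
    by (simp add: bij_betw_def atLeast0LessThan image_comp[symmetric, unfolded comp_def])
  then show thesis by (rule that)
qed

lemma maximal_separated_orbit_return:
  fixes U :: "'k::semigroup_mult \<Rightarrow> 'a::real_vector \<Rightarrow> 'a"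
  assumes "seminorm N" "\<epsilon> > 0"
    and "\<And>g. linear (U g)"
    and U_mult: "\<And>g h x. U g (U h x) = U (g * h) x"
    and "\<And>g x. N x \<le> N (U g x)"
    and S: "maximal_separated N \<epsilon> (range (\<lambda>g. U g x0)) ((\<lambda>i. U (hs i) x0) ` I)"
  shows "\<exists>i\<in>I. N (U (g * hs i) x0 - x0) < \<epsilon>"
proof -
  fix k :: 'k
  have "U (k * g) ` range (\<lambda>g. U g x0) \<subseteq> range (\<lambda>g. U g x0)"
    by (auto simp: U_mult)
  from maximal_separated_image[OF assms(1,2,3) assms(5) this S]
  obtain i where "i \<in> I" and close: "N (U k x0 - U (k * g) (U (hs i) x0)) < \<epsilon>"
    using maximal_separated_net[OF assms(1,2)] by blast
  have "N (x0 - U (g * hs i) x0) \<le> N (U k (x0 - U (g * hs i) x0))" by (rule assms(5))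
  also have "\<dots> = N (U k x0 - U (k * g) (U (hs i) x0))"
    by (simp add: linear_diff[OF assms(3)] U_mult mult.assoc)
  also have "\<dots> < \<epsilon>" by (rule close)
  finally have "N (U (g * hs i) x0 - x0) < \<epsilon>"
    by (simp add: seminorm_minus_commute[OF assms(1), of x0])
  with \<open>i \<in> I\<close> show ?thesis by blast
qed

theorem proposition5p6:
  fixes N :: "'a::real_vector \<Rightarrow> real"
    and U :: "'k::semigroup_mult \<Rightarrow> 'a \<Rightarrow> 'a"
    and x0 :: 'a and \<epsilon> :: real
  assumes "seminorm N"
    and "\<And>g. linear (U g)"
    and "\<And>g h. U g \<circ> U h = U (g * h)"
    and "\<And>g x. N (U g x) \<ge> N x"
    and "totally_bounded_sn N {U g x0 | g. True}"
    and "\<epsilon> > 0"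
  shows "relatively_dense {g. N (U g x0 - x0) < \<epsilon>}"
proof -
  have U_mult: "U g (U h x) = U (g * h) x" for g h x
    using assms(3) by (metis comp_apply)
  have "range (\<lambda>g. U g x0) = {U g x0 | g. True}" by blast
  then obtain S where S: "maximal_separated N \<epsilon> (range (\<lambda>g. U g x0)) S"
    using ex_maximal_separated assms(1,5,6) by metis
  then have "finite S" "S \<subseteq> range (\<lambda>g. U g x0)"
    unfolding maximal_separated_def by blast+
  then obtain hs and m :: nat where S_enum: "S = (\<lambda>i. U (hs i) x0) ` {..<m}"
    by (rule finite_subset_range_enum)
  show ?thesis
    unfolding relatively_dense_def
  proof (intro exI[of _ m] exI[of _ hs] allI)
    fix g
    from maximal_separated_orbit_return[OF assms(1,6,2) U_mult assms(4) S[unfolded S_enum]]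
    show "{g. N (U g x0 - x0) < \<epsilon>} \<inter> {g * hs i |i. i < m} \<noteq> {}"
      by blast
  qed
qed

end
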